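(* Let $q,r,\nu$ be positive integers with $r\ge q$ and $\nu\ge q$. There exists a matrix $C\in\mathbb{R}^{\nu r\times q}$ not depending on $z$ such that $\mathcal{M}^0(z)C=I_q$ for all $z$; consequently for every $b\in\mathbb{R}^q$ the equation $\mathcal{M}^0(z)X=b$ has the $z$-independent solution $X=Cb$. Such a constant matrix $C$ is unique iff $\nu=q$. In all cases one can take $C=(I_\nu\otimes D_r^{-1})\mathcal{B}^0D_q^{-1}$.
   Context: Matrix indices start at $0$. $u(z)=(1,\dots,z^{q-1})^\top$, $w(z)=(1,\dots,z^{r-1})$, $M(z)=u(z)w(z)$, and $\mathcal{M}^0(z)=(M(z),M'(z),\dots,M^{(\nu-1)}(z))\in\mathbb{C}^{q\times\nu r}$. $D_n=\mathrm{diag}(0!,\dots,(n-1)!)$. $B^k\in\mathbb{R}^{r\times q}$ has entries $B^k_{ij}=(-1)^i\binom{q}{k+1}$ if $i+j=k$ and $0$ otherwise, and $\mathcal{B}^0\in\mathbb{R}^{\nu r\times q}$ stacks $B^0,\dots,B^{\nu-1}$ vertically. *)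

theory Defs
  imports "HOL-Analysis.Analysis" "Jordan_Normal_Form.Gauss_Jordan_Elimination"
begin

text \<open>Indices start at 0. u(z) = (1,..,z^(q-1))^T, w(z) = (1,..,z^(r-1)).\<close>
definition uvec :: "nat \<Rightarrow> complex \<Rightarrow> complex mat" where
  "uvec q z = mat q 1 (\<lambda>(i,_). z ^ i)"

definition wvec :: "nat \<Rightarrow> complex \<Rightarrow> complex mat" where
  "wvec r z = mat 1 r (\<lambda>(_,j). z ^ j)"

definition Mmat :: "nat \<Rightarrow> nat \<Rightarrow> complex \<Rightarrow> complex mat" where
  "Mmat q r z = uvec q z * wvec r z"

definition Mderiv :: "nat \<Rightarrow> nat \<Rightarrow> nat \<Rightarrow> complex \<Rightarrow> complex mat" where
  "Mderiv q r k z = mat q r (\<lambda>(i,j). (deriv ^^ k) (\<lambda>\<zeta>. Mmat q r \<zeta> $$ (i,j)) z)"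

text \<open>calM0 = (M, M', ..., M^(nu-1)), a q x (nu*r) matrix; column k*r+j is column j of M^(k).\<close>
definition calM0 :: "nat \<Rightarrow> nat \<Rightarrow> nat \<Rightarrow> complex \<Rightarrow> complex mat" where
  "calM0 q r \<nu> z = mat q (\<nu> * r) (\<lambda>(i,c). Mderiv q r (c div r) z $$ (i, c mod r))"

definition Dmat :: "nat \<Rightarrow> real mat" where
  "Dmat n = mat n n (\<lambda>(i,j). if i = j then fact i else 0)"

definition Bmat :: "nat \<Rightarrow> nat \<Rightarrow> nat \<Rightarrow> real mat" where
  "Bmat q r k = mat r q (\<lambda>(i,j). if i + j = k then (-1) ^ i * real (q choose (k+1)) else 0)"

text \<open>calB0 stacks B^0, ..., B^(nu-1) vertically; row k*r+i is row i of B^k.\<close>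
definition calB0 :: "nat \<Rightarrow> nat \<Rightarrow> nat \<Rightarrow> real mat" where
  "calB0 q r \<nu> = mat (\<nu> * r) q (\<lambda>(c,j). Bmat q r (c div r) $$ (c mod r, j))"

definition kron :: "'a :: times mat \<Rightarrow> 'a mat \<Rightarrow> 'a mat" where
  "kron A B = mat (dim_row A * dim_row B) (dim_col A * dim_col B)
     (\<lambda>(i,j). A $$ (i div dim_row B, j div dim_col B) * B $$ (i mod dim_row B, j mod dim_col B))"

definition minv :: "real mat \<Rightarrow> real mat" where
  "minv A = the (mat_inverse A)"

end

theory Submission
  imports Defs "HOL-Complex_Analysis.Complex_Singularities"
    "HOL-Computational_Algebra.Formal_Power_Series"
begin

text \<open>
  Column \<open>k * r + j\<close> of \<open>calM0 q r \<nu> z\<close> has the entries \<open>pochhammer (i + j - k + 1) k * z ^ (i + j - k)\<close>,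
  falling factorials times powers of \<open>z\<close>. For the explicit \<open>C\<close>, entry \<open>(i, l)\<close> of \<open>calM0 q r \<nu> z * C\<close>
  collapses to \<open>z ^ (i - l) * (i choose l) * (\<Sum>j. (-1) ^ j * (i + j choose i) * (q choose (j + l + 1)))\<close>,
  and Vandermonde's identity with the negative upper index \<open>-(i + 1)\<close> evaluates the sum to
  \<open>(q - i - 1) choose (q - l - 1)\<close>, which is 1 for \<open>i = l\<close> and 0 for \<open>l < i\<close>.

  If \<open>q < \<nu>\<close>, the first column of the block of \<open>(\<nu> - 1)\<close>-st derivatives vanishes identically, so the
  corresponding row of \<open>C\<close> can be altered freely. If \<open>\<nu> = q\<close>, a vector annihilated by \<open>calM0 q r q z\<close>
  for all \<open>z\<close> is zero: comparing coefficients of powers of \<open>z\<close> along a diagonal \<open>j - k = d\<close> gives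
  \<open>\<Sum>k. y k * pochhammer t k = 0\<close> at the \<open>q\<close> consecutive points \<open>t = d + 1, \<dots>, d + q\<close>,
  and repeated forward differences in \<open>t\<close> force \<open>y = 0\<close>.
\<close>

lemma Mmat_index: "i < q \<Longrightarrow> j < r \<Longrightarrow> Mmat q r z $$ (i, j) = z ^ (i + j)"
  by (simp add: Mmat_def uvec_def wvec_def scalar_prod_def power_add)

lemma block_index:
  fixes r :: nat
  assumes "k < \<nu>" "j < r"
  shows "k * r + j < \<nu> * r" "(k * r + j) div r = k" "(k * r + j) mod r = j"
proof -
  have "(k + 1) * r \<le> \<nu> * r"
    using assms(1) by (intro mult_le_mono1) simp
  then show "k * r + j < \<nu> * r"
    using assms(2) by simp
qed (use assms in auto)

lemma calM0_index:
  assumes "i < q" "k < \<nu>" "j < r"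
  shows "calM0 q r \<nu> z $$ (i, k * r + j) = pochhammer (of_nat (Suc (i + j) - k)) k * z ^ (i + j - k)"
proof -
  have "(\<lambda>\<zeta>. Mmat q r \<zeta> $$ (i, j)) = (\<lambda>\<zeta>. \<zeta> ^ (i + j))"
    using assms by (simp add: Mmat_index)
  then show ?thesis
    using assms block_index[OF assms(2,3)] higher_deriv_power[of k 0 "i + j" z]
    by (simp add: calM0_def Mderiv_def)
qed

lemma sum_blocks:
  fixes \<nu> r :: nat
  shows "(\<Sum>c<\<nu> * r. f c) = (\<Sum>k<\<nu>. \<Sum>j<r. f (k * r + j))"
proof -
  have "sum f {k * r..<k * r + r} = (\<Sum>j<r. f (k * r + j))" for k
    using sum.shift_bounds_nat_ivl[of f 0 "k * r" r] by (simp add: atLeast0LessThan add.commute)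
  then show ?thesis
    by (simp add: sum.nat_group[symmetric])
qed

lemma calM0_carrier: "calM0 q r \<nu> z \<in> carrier_mat q (\<nu> * r)"
  by (simp add: calM0_def)

lemma row_calM0_scalar_prod:
  assumes "i < q" "v \<in> carrier_vec (\<nu> * r)"
  shows "row (calM0 q r \<nu> z) i \<bullet> v
    = (\<Sum>k<\<nu>. \<Sum>j<r. pochhammer (of_nat (Suc (i + j) - k)) k * z ^ (i + j - k) * v $ (k * r + j))"
proof -
  have "row (calM0 q r \<nu> z) i \<bullet> v = (\<Sum>c<\<nu> * r. calM0 q r \<nu> z $$ (i, c) * v $ c)"
    using assms by (simp add: scalar_prod_def calM0_def atLeast0LessThan)
  also have "\<dots> = (\<Sum>k<\<nu>. \<Sum>j<r. calM0 q r \<nu> z $$ (i, k * r + j) * v $ (k * r + j))"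
    by (rule sum_blocks)
  finally show ?thesis
    using assms(1) by (simp add: calM0_index)
qed

lemma minv_eqI:
  assumes A: "A \<in> carrier_mat n n" and B: "B \<in> carrier_mat n n"
    and AB: "A * B = 1\<^sub>m n" and BA: "B * A = 1\<^sub>m n"
  shows "minv A = B"
proof (cases "mat_inverse A")
  case None
  have "A \<in> Units (ring_mat TYPE(real) n undefined)"
    unfolding Units_def using A B AB BA by (auto simp: ring_mat_simps)
  with mat_inverse(1)[OF A None, of undefined] show ?thesis by blast
next
  case (Some B')
  from mat_inverse(2)[OF A Some]
  have B': "B' * A = 1\<^sub>m n" "B' \<in> carrier_mat n n" by auto
  have "B' = B' * (A * B)" using B' by (simp add: AB)
  also have "\<dots> = B" using A B B' by (simp add: assoc_mult_mat[symmetric])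
  finally show ?thesis by (simp add: minv_def Some)
qed

lemma minv_mat_diag:
  assumes "\<And>i. i < n \<Longrightarrow> f i \<noteq> 0"
  shows "minv (mat_diag n f) = mat_diag n (\<lambda>i. inverse (f i))"
proof (rule minv_eqI)
  have "mat_diag n (\<lambda>i. f i * inverse (f i)) = 1\<^sub>m n"
    "mat_diag n (\<lambda>i. inverse (f i) * f i) = 1\<^sub>m n"
    using assms by (auto simp: mat_diag_def)
  then show "mat_diag n f * mat_diag n (\<lambda>i. inverse (f i)) = 1\<^sub>m n"
    "mat_diag n (\<lambda>i. inverse (f i)) * mat_diag n f = 1\<^sub>m n"
    by simp_all
qed simp_all

lemma Dmat_eq_mat_diag: "Dmat n = mat_diag n fact"
  by (auto simp: Dmat_def mat_diag_def)

lemma kron_one_mat_diag: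
  fixes f :: "nat \<Rightarrow> 'a :: semiring_1"
  shows "kron (1\<^sub>m \<nu>) (mat_diag r f) = mat_diag (\<nu> * r) (\<lambda>c. f (c mod r))"
proof (rule eq_matI)
  fix c d assume "c < dim_row (mat_diag (\<nu> * r) (\<lambda>c. f (c mod r)))"
    "d < dim_col (mat_diag (\<nu> * r) (\<lambda>c. f (c mod r)))"
  then have "c < \<nu> * r" "d < \<nu> * r" by (auto simp: mat_diag_def)
  then have "c div r < \<nu>" "d div r < \<nu>" "0 < r"
    by (auto simp: less_mult_imp_div_less mult.commute intro: gr0I)
  moreover have "c = d \<longleftrightarrow> c div r = d div r \<and> c mod r = d mod r"
    by (metis div_mult_mod_eq)
  ultimately show "kron (1\<^sub>m \<nu>) (mat_diag r f) $$ (c, d) = mat_diag (\<nu> * r) (\<lambda>c. f (c mod r)) $$ (c, d)"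
    using \<open>c < \<nu> * r\<close> \<open>d < \<nu> * r\<close> by (auto simp: kron_def mat_diag_def)
qed (auto simp: kron_def mat_diag_def)

definition Cmat :: "nat \<Rightarrow> nat \<Rightarrow> nat \<Rightarrow> real mat" where
  "Cmat q r \<nu> = kron (1\<^sub>m \<nu>) (minv (Dmat r)) * calB0 q r \<nu> * minv (Dmat q)"

lemma Cmat_eq: "Cmat q r \<nu> =
  mat_diag (\<nu> * r) (\<lambda>c. inverse (fact (c mod r))) * calB0 q r \<nu> * mat_diag q (\<lambda>l. inverse (fact l))"
  by (simp add: Cmat_def Dmat_eq_mat_diag minv_mat_diag kron_one_mat_diag)

lemma Cmat_carrier: "Cmat q r \<nu> \<in> carrier_mat (\<nu> * r) q"
  by (auto simp: Cmat_eq calB0_def intro!: mult_carrier_mat)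

lemma Cmat_index:
  assumes "c < \<nu> * r" "l < q"
  shows "Cmat q r \<nu> $$ (c, l) = (if c mod r + l = c div r
    then (-1) ^ (c mod r) * of_nat (q choose (c div r + 1)) / (fact (c mod r) * fact l) else 0)"
proof -
  have "0 < r" using assms by (cases r) auto
  with assms show ?thesis
    by (simp add: Cmat_eq mat_diag_mult_left[of _ "\<nu> * r" q] mat_diag_mult_right[of _ "\<nu> * r" q]
      calB0_def Bmat_def divide_inverse)
qed

lemma pochhammer_of_nat_plus_1: "pochhammer (of_nat m + 1) k = (fact (m + k) / fact m :: 'a :: field_char_0)"
  using pochhammer_product'[of "1 :: 'a" m k] by (simp add: pochhammer_fact[symmetric] add.commute field_simps)

lemma alternating_Vandermonde:
  assumes "l \<le> i" "i < q"
  shows "(\<Sum>j = 0..q - l - 1. (-1) ^ j * of_nat (i + j choose i) * of_nat (q choose (j + l + 1)))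
    = (of_nat ((q - i - 1) choose (q - l - 1)) :: 'a :: field_char_0)"
proof -
  define n where "n = q - l - 1"
  have "(- (of_nat i + 1) gchoose j) * (of_nat q gchoose (n - j))
      = (-1) ^ j * of_nat (i + j choose i) * (of_nat (q choose (j + l + 1)) :: 'a)" if "j \<le> n" for j
  proof -
    have "(- (of_nat i + 1) gchoose j) = (-1) ^ j * ((of_nat i + 1 + of_nat j - 1) gchoose j :: 'a)"
      by (rule gbinomial_minus)
    also have "(of_nat i + 1 + of_nat j - 1 :: 'a) = of_nat (i + j)"
      by simp
    finally have "(- (of_nat i + 1) gchoose j) = (-1) ^ j * (of_nat (i + j choose j) :: 'a)"
      by (simp add: binomial_gbinomial)
    moreover have "q choose (n - j) = q choose (j + l + 1)"
      using that assms by (subst binomial_symmetric) (auto simp: n_def intro: arg_cong[of _ _ "(choose) q"])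
    ultimately show ?thesis
      by (simp add: binomial_gbinomial[symmetric] binomial_symmetric[of j "i + j"])
  qed
  then have "(\<Sum>j = 0..n. (-1) ^ j * of_nat (i + j choose i) * (of_nat (q choose (j + l + 1)) :: 'a))
      = (- (of_nat i + 1) + of_nat q) gchoose n"
    by (simp add: gbinomial_Vandermonde[symmetric])
  also have "(- (of_nat i + 1) + of_nat q :: 'a) = of_nat (q - i - 1)"
    using assms by (simp add: of_nat_diff)
  finally show ?thesis
    by (simp add: n_def binomial_gbinomial)
qed

lemma calM0_Cmat_index_sum:
  assumes "i < q" "l < q" "q \<le> r" "q \<le> \<nu>"
  shows "(\<Sum>j<r. if j + l < \<nu> then pochhammer (of_nat (Suc (i + j) - (j + l))) (j + l)
      * ((-1) ^ j * of_nat (q choose (j + l + 1)) / (fact j * fact l)) else 0)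
    = (if i = l then 1 else 0 :: 'a :: field_char_0)"
proof (cases "l \<le> i")
  case False
  have "pochhammer (of_nat (Suc (i + j) - (j + l))) (j + l) = (0 :: 'a)" for j
  proof -
    have "Suc (i + j) - (j + l) = 0" "j + l \<noteq> 0" using False by auto
    then show ?thesis by (simp add: pochhammer_0_left)
  qed
  then show ?thesis
    using False by (simp only: mult_zero_left if_cancel sum.neutral_const) simp
next
  case True
  define n where "n = q - l - 1"
  have summand: "(if j + l < \<nu> then pochhammer (of_nat (Suc (i + j) - (j + l))) (j + l)
      * ((-1) ^ j * of_nat (q choose (j + l + 1)) / (fact j * fact l)) else 0)
    = of_nat (i choose l) * (if j \<le> n then (-1) ^ j * of_nat (i + j choose i) * of_nat (q choose (j + l + 1)) else 0 :: 'a)"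
    for j
  proof (cases "j \<le> n")
    case j: True
    have "pochhammer (of_nat (Suc (i + j) - (j + l))) (j + l) = (fact (i + j) / fact (i - l) :: 'a)"
      using True pochhammer_of_nat_plus_1[of "i - l" "j + l"] by (simp add: Suc_diff_le add.commute)
    moreover have "j + l < \<nu>" using j assms by (simp add: n_def)
    ultimately show ?thesis
      using True j by (simp add: binomial_fact field_simps)
  next
    case False
    then have "q choose (j + l + 1) = 0" using assms by (simp add: n_def)
    then show ?thesis using False by simp
  qed
  have "(\<Sum>j<r. if j \<le> n then (-1) ^ j * of_nat (i + j choose i) * of_nat (q choose (j + l + 1)) else 0)
      = (\<Sum>j = 0..n. (-1) ^ j * of_nat (i + j choose i) * (of_nat (q choose (j + l + 1)) :: 'a))"
    using assms by (intro sum.mono_neutral_cong_right) (auto simp: n_def)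
  also have "\<dots> = of_nat ((q - i - 1) choose n)"
    unfolding n_def using True assms(1) by (rule alternating_Vandermonde)
  finally show ?thesis
    using True assms by (auto simp: summand sum_distrib_left[symmetric] n_def)
qed

lemma calM0_mult_Cmat:
  assumes "q \<le> r" "q \<le> \<nu>"
  shows "calM0 q r \<nu> z * map_mat complex_of_real (Cmat q r \<nu>) = 1\<^sub>m q"
proof (rule eq_matI)
  fix i l assume "i < dim_row (1\<^sub>m q)" "l < dim_col (1\<^sub>m q)"
  then have il: "i < q" "l < q" by simp_all
  let ?c = "\<lambda>j. (-1) ^ j * of_nat (q choose (j + l + 1)) / (fact j * fact l) :: complex"
  have "(calM0 q r \<nu> z * map_mat complex_of_real (Cmat q r \<nu>)) $$ (i, l)
      = row (calM0 q r \<nu> z) i \<bullet> col (map_mat complex_of_real (Cmat q r \<nu>)) l"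
    using il Cmat_carrier[of q r \<nu>] calM0_carrier[of q r \<nu> z] by simp
  also have "\<dots> = (\<Sum>k<\<nu>. \<Sum>j<r. pochhammer (of_nat (Suc (i + j) - k)) k * z ^ (i + j - k)
      * col (map_mat complex_of_real (Cmat q r \<nu>)) l $ (k * r + j))"
    using il Cmat_carrier[of q r \<nu>] by (intro row_calM0_scalar_prod) auto
  also have "\<dots> = (\<Sum>k<\<nu>. \<Sum>j<r. if k = j + l then z ^ (i - l)
      * (pochhammer (of_nat (Suc (i + j) - (j + l))) (j + l) * ?c j) else 0)"
    using il Cmat_carrier[of q r \<nu>] by (intro sum.cong refl) (auto simp: Cmat_index block_index)
  also have "\<dots> = (\<Sum>j<r. z ^ (i - l) * (if j + l < \<nu> then
      pochhammer (of_nat (Suc (i + j) - (j + l))) (j + l) * ?c j else 0))"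
    by (subst sum.swap) (auto intro!: sum.cong)
  also have "\<dots> = z ^ (i - l) * (\<Sum>j<r. if j + l < \<nu> then
      pochhammer (of_nat (Suc (i + j) - (j + l))) (j + l) * ?c j else 0)"
    by (simp add: sum_distrib_left)
  also have "\<dots> = 1\<^sub>m q $$ (i, l)"
    using il by (simp add: calM0_Cmat_index_sum[OF il assms])
  finally show "(calM0 q r \<nu> z * map_mat complex_of_real (Cmat q r \<nu>)) $$ (i, l) = 1\<^sub>m q $$ (i, l)" .
qed (use Cmat_carrier[of q r \<nu>] in \<open>simp_all add: calM0_def\<close>)

lemma calM0_mult_corner_eq_0:
  assumes "q < \<nu>" "0 < r"
  shows "calM0 q r \<nu> z * map_mat complex_of_real
    (mat (\<nu> * r) n (\<lambda>(c, l). if c = (\<nu> - 1) * r \<and> l = 0 then 1 else 0)) = 0\<^sub>m q n"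
    (is "_ * map_mat _ ?E = _")
proof (rule eq_matI)
  have E: "?E \<in> carrier_mat (\<nu> * r) n" by simp
  fix i l assume "i < dim_row (0\<^sub>m q n :: complex mat)" "l < dim_col (0\<^sub>m q n :: complex mat)"
  then have il: "i < q" "l < n" by simp_all
  \<comment> \<open>column \<open>(\<nu> - 1) * r\<close> holds the \<open>(\<nu> - 1)\<close>-th derivatives of \<open>z ^ i\<close>, \<open>i < q \<le> \<nu> - 1\<close>\<close>
  have zero: "pochhammer (of_nat (Suc (i + j) - k)) k * z ^ (i + j - k)
      * col (map_mat complex_of_real ?E) l $ (k * r + j) = 0" if "k < \<nu>" "j < r" for k j
  proof (cases "k * r + j = (\<nu> - 1) * r")
    case True
    then have "k = \<nu> - 1" "j = 0"
      using block_index(2,3)[OF that] \<open>0 < r\<close> by simp_all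
    then show ?thesis using il assms by (simp add: pochhammer_0_left)
  next
    case False
    then show ?thesis using il block_index[OF that] by simp
  qed
  have "row (calM0 q r \<nu> z) i \<bullet> col (map_mat complex_of_real ?E) l
      = (\<Sum>k<\<nu>. \<Sum>j<r. pochhammer (of_nat (Suc (i + j) - k)) k * z ^ (i + j - k)
        * col (map_mat complex_of_real ?E) l $ (k * r + j))"
    using il E by (intro row_calM0_scalar_prod) auto
  also have "\<dots> = 0"
    by (intro sum.neutral ballI zero) auto
  finally show "(calM0 q r \<nu> z * map_mat complex_of_real ?E) $$ (i, l) = 0\<^sub>m q n $$ (i, l)"
    using il E calM0_carrier[of q r \<nu> z] by simp
qed (use calM0_carrier[of q r \<nu> z] in simp_all)

lemma right_inverse_calM0_not_unique:
  assumes "0 < q" "q < \<nu>" "0 < r"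
    and C: "C \<in> carrier_mat (\<nu> * r) q"
    and inv: "\<And>z. calM0 q r \<nu> z * map_mat complex_of_real C = 1\<^sub>m q"
  obtains C' where "C' \<in> carrier_mat (\<nu> * r) q" "C' \<noteq> C"
    "\<And>z. calM0 q r \<nu> z * map_mat complex_of_real C' = 1\<^sub>m q"
proof
  define E :: "real mat" where "E = mat (\<nu> * r) q (\<lambda>(c, l). if c = (\<nu> - 1) * r \<and> l = 0 then 1 else 0)"
  have E: "E \<in> carrier_mat (\<nu> * r) q" by (simp add: E_def)
  show "C + E \<in> carrier_mat (\<nu> * r) q" using C E by simp
  have "(C + E) $$ ((\<nu> - 1) * r, 0) = C $$ ((\<nu> - 1) * r, 0) + 1"
    using assms E_def C by simp
  then show "C + E \<noteq> C" by auto
  fix z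
  have "map_mat complex_of_real (C + E) = map_mat complex_of_real C + map_mat complex_of_real E"
    using C E by (intro eq_matI) simp_all
  then show "calM0 q r \<nu> z * map_mat complex_of_real (C + E) = 1\<^sub>m q"
    using C E calM0_carrier[of q r \<nu> z] calM0_mult_corner_eq_0[OF \<open>q < \<nu>\<close> \<open>0 < r\<close>, of z q]
    by (simp add: mult_add_distrib_mat[of _ q "\<nu> * r"] inv E_def)
qed

lemma pochhammer_forward_difference:
  fixes x :: "'a :: comm_ring_1"
  shows "pochhammer (x + 1) (Suc k) - pochhammer x (Suc k) = of_nat (Suc k) * pochhammer (x + 1) k"
proof -
  have "pochhammer (x + 1) (Suc k) = (x + 1 + of_nat k) * pochhammer (x + 1) k"
    by (rule pochhammer_rec')
  moreover have "pochhammer x (Suc k) = x * pochhammer (x + 1) k"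
    by (rule pochhammer_rec)
  ultimately show ?thesis by (simp add: algebra_simps)
qed

lemma pochhammer_sums_eq_0_imp_eq_0:
  fixes y :: "nat \<Rightarrow> 'a :: {idom, ring_char_0}"
  shows "(\<And>s. s < K \<Longrightarrow> (\<Sum>k<K. y k * pochhammer (b + of_nat s) k) = 0) \<Longrightarrow> k < K \<Longrightarrow> y k = 0"
proof (induction K arbitrary: b y k)
  case (Suc K)
  define y' where "y' k = of_nat (Suc k) * y (Suc k)" for k
  \<comment> \<open>taking forward differences in \<open>s\<close> lowers the degree by one\<close>
  have "(\<Sum>k<K. y' k * pochhammer (b + 1 + of_nat s) k) = 0" if "s < K" for s
  proof -
    have "(\<Sum>k<K. y' k * pochhammer (b + 1 + of_nat s) k)
        = (\<Sum>k<K. y (Suc k) * (pochhammer (b + of_nat s + 1) (Suc k) - pochhammer (b + of_nat s) (Suc k)))"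
      by (simp only: pochhammer_forward_difference y'_def) (simp add: algebra_simps)
    also have "\<dots> = (\<Sum>k<Suc K. y k * (pochhammer (b + of_nat s + 1) k - pochhammer (b + of_nat s) k))"
      by (subst sum.lessThan_Suc_shift) simp
    also have "\<dots> = (\<Sum>k<Suc K. y k * pochhammer (b + of_nat (Suc s)) k)
        - (\<Sum>k<Suc K. y k * pochhammer (b + of_nat s) k)"
      by (simp add: sum_subtractf algebra_simps)
    also have "\<dots> = 0"
      using that Suc.prems(1)[of s] Suc.prems(1)[of "Suc s"] by simp
    finally show ?thesis .
  qed
  then have "y' k = 0" if "k < K" for k
    using that by (rule Suc.IH)
  then have y_Suc: "y (Suc k) = 0" if "k < K" for k
    using that by (simp add: y'_def del: of_nat_Suc)
  have "(\<Sum>k<Suc K. y k * pochhammer b k) = 0"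
    using Suc.prems(1)[of 0] by simp
  then have "y 0 = 0"
    using y_Suc by (simp add: sum.lessThan_Suc_shift del: sum.lessThan_Suc)
  then show ?case
    using y_Suc Suc.prems(2) by (cases k) simp_all
qed simp

lemma power_sum_coeff_eq_0:
  fixes a :: "'b \<Rightarrow> 'a :: {idom, real_normed_div_algebra}"
  assumes "finite A" and sums: "\<And>z. (\<Sum>t\<in>A. a t * z ^ e t) = 0"
  shows "(\<Sum>t\<in>A. if e t = p then a t else 0) = 0"
proof -
  define N where "N = Max (insert p (e ` A))"
  define c where "c i = (\<Sum>t\<in>A. if e t = i then a t else 0)" for i
  have le_N: "p \<le> N" "\<And>t. t \<in> A \<Longrightarrow> e t \<le> N"
    using \<open>finite A\<close> by (simp_all add: N_def)
  have "(\<Sum>i\<le>N. c i * z ^ i) = 0" for z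
  proof -
    have "(\<Sum>i\<le>N. c i * z ^ i) = (\<Sum>t\<in>A. \<Sum>i\<le>N. if e t = i then a t * z ^ i else 0)"
      unfolding c_def sum_distrib_right by (subst sum.swap) (intro sum.cong refl, simp)
    also have "\<dots> = (\<Sum>t\<in>A. a t * z ^ e t)"
      using le_N by (intro sum.cong refl) simp
    finally show ?thesis using sums by simp
  qed
  then have "c p = 0"
    using le_N polyfun_eq_0 by blast
  then show ?thesis by (simp add: c_def)
qed

lemma sum_pochhammer_select:
  fixes f :: "nat \<Rightarrow> 'a :: comm_semiring_1"
  shows "(\<Sum>j<r. if i + j - k = p then pochhammer (of_nat (Suc (i + j) - k)) k * f j else 0)
    = (if i \<le> p + k \<and> p + k - i < r then pochhammer (of_nat p + 1) k * f (p + k - i) else 0)"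
proof -
  have "(if i + j - k = p then pochhammer (of_nat (Suc (i + j) - k)) k * f j else 0)
      = (if j = p + k - i then (if i \<le> p + k then pochhammer (of_nat p + 1) k * f j else 0) else 0)" for j
  proof (cases "k \<le> i + j")
    case True
    then show ?thesis by (auto simp: Suc_diff_le add.commute)
  next
    case False
    \<comment> \<open>the exponent \<open>i + j - k\<close> is truncated to 0 here, but the coefficient vanishes\<close>
    then have "Suc (i + j) - k = 0" "k \<noteq> 0" by auto
    then show ?thesis using False by (auto simp: pochhammer_0_left)
  qed
  then show ?thesis by (simp add: sum.delta)
qed

lemma pochhammer_diagonals_eq_0_imp_eq_0:
  fixes x :: "nat \<Rightarrow> nat \<Rightarrow> 'a :: {idom, ring_char_0}"
  assumes diag: "\<And>i p. i < q \<Longrightarrow>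
      (\<Sum>k<q. if i \<le> p + k \<and> p + k - i < r then pochhammer (of_nat p + 1) k * x k (p + k - i) else 0) = 0"
    and "k0 < q" "j0 < r"
  shows "x k0 j0 = 0"
proof -
  define y where "y k = (if k0 \<le> k + j0 \<and> k + j0 - k0 < r then x k (k + j0 - k0) else 0)" for k
  define b :: 'a where "b = of_nat j0 - of_nat k0 + 1"
  have "(\<Sum>k<q. y k * pochhammer (b + of_nat s) k) = 0" if "s < q" for s
  proof (cases "k0 \<le> s + j0")
    case True
    have "y k * pochhammer (b + of_nat s) k = (if s \<le> (s + j0 - k0) + k \<and> (s + j0 - k0) + k - s < r
        then pochhammer (of_nat (s + j0 - k0) + 1) k * x k ((s + j0 - k0) + k - s) else 0)" for k
    proof -
      have "b + of_nat s = of_nat (s + j0 - k0) + 1"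
        using True by (simp add: b_def of_nat_diff)
      moreover have "s \<le> (s + j0 - k0) + k \<longleftrightarrow> k0 \<le> k + j0" "(s + j0 - k0) + k - s = k + j0 - k0"
        using True by auto
      ultimately show ?thesis by (simp add: y_def)
    qed
    then show ?thesis using diag[OF that, of "s + j0 - k0"] by simp
  next
    case False
    have zero: "y k * pochhammer (b + of_nat s) k = 0" for k
    proof (cases "k0 \<le> k + j0")
      case True
      have "b + of_nat s = - of_nat (k0 - j0 - s - 1)"
        using False by (simp add: b_def of_nat_diff)
      moreover have "k0 - j0 - s - 1 < k"
        using False True by simp
      ultimately have "pochhammer (b + of_nat s) k = 0"
        by (simp add: pochhammer_of_nat_eq_0_lemma)
      then show ?thesis by simp
    next
      case False
      then show ?thesis by (simp add: y_def)
    qed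
    show ?thesis by (simp add: zero)
  qed
  then have "y k0 = 0"
    using \<open>k0 < q\<close> by (rule pochhammer_sums_eq_0_imp_eq_0)
  then show ?thesis
    using \<open>j0 < r\<close> by (simp add: y_def)
qed

lemma calM0_square_kernel:
  assumes v: "v \<in> carrier_vec (q * r)" and ker: "\<And>z. calM0 q r q z *\<^sub>v v = 0\<^sub>v q"
  shows "v = 0\<^sub>v (q * r)"
proof (rule eq_vecI)
  define x where "x k j = v $ (k * r + j)" for k j
  define a where "a i = (\<lambda>(k, j). pochhammer (of_nat (Suc (i + j) - k)) k * x k j)" for i
  define e where "e i = (\<lambda>(k, j). i + j - k :: nat)" for i :: nat
  have "(\<Sum>t\<in>{..<q} \<times> {..<r}. a i t * z ^ e i t) = 0" if "i < q" for i z
  proof -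
    have "(\<Sum>t\<in>{..<q} \<times> {..<r}. a i t * z ^ e i t) = (\<Sum>k<q. \<Sum>j<r. a i (k, j) * z ^ e i (k, j))"
      by (simp add: sum.cartesian_product split_def)
    also have "\<dots> = row (calM0 q r q z) i \<bullet> v"
      using that v by (simp add: row_calM0_scalar_prod a_def e_def x_def mult_ac)
    also have "\<dots> = (calM0 q r q z *\<^sub>v v) $ i"
      using that calM0_carrier[of q r q z] by simp
    finally show ?thesis
      using that by (simp add: ker)
  qed
  then have coeffs: "(\<Sum>t\<in>{..<q} \<times> {..<r}. if e i t = p then a i t else 0) = 0" if "i < q" for i p
    using that by (intro power_sum_coeff_eq_0) auto
  have "(\<Sum>k<q. if i \<le> p + k \<and> p + k - i < r then pochhammer (of_nat p + 1) k * x k (p + k - i) else 0) = 0"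
    if "i < q" for i p
  proof -
    have "(\<Sum>k<q. if i \<le> p + k \<and> p + k - i < r then pochhammer (of_nat p + 1) k * x k (p + k - i) else 0)
        = (\<Sum>k<q. \<Sum>j<r. if i + j - k = p then pochhammer (of_nat (Suc (i + j) - k)) k * x k j else 0)"
      by (simp add: sum_pochhammer_select)
    also have "\<dots> = (\<Sum>t\<in>{..<q} \<times> {..<r}. if e i t = p then a i t else 0)"
      unfolding a_def e_def by (simp add: sum.cartesian_product split_def cong: if_cong)
    finally show ?thesis
      using coeffs[OF that] by simp
  qed
  then have x_eq_0: "x k j = 0" if "k < q" "j < r" for k j
    using that by (rule pochhammer_diagonals_eq_0_imp_eq_0)
  fix c assume "c < dim_vec (0\<^sub>v (q * r) :: complex vec)"
  then have "c < q * r" by simp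
  moreover from this have "0 < r" by (cases r) auto
  ultimately have "c div r < q" "c mod r < r"
    by (simp_all add: less_mult_imp_div_less)
  then show "v $ c = 0\<^sub>v (q * r) $ c"
    using x_eq_0[of "c div r" "c mod r"] \<open>c < q * r\<close> by (simp add: x_def)
qed (use v in simp)

lemma right_inverse_calM0_square_unique:
  assumes C1: "C1 \<in> carrier_mat (q * r) q" and C2: "C2 \<in> carrier_mat (q * r) q"
    and inv1: "\<And>z. calM0 q r q z * map_mat complex_of_real C1 = 1\<^sub>m q"
    and inv2: "\<And>z. calM0 q r q z * map_mat complex_of_real C2 = 1\<^sub>m q"
  shows "C1 = C2"
proof (rule eq_matI)
  fix c l assume "c < dim_row C2" "l < dim_col C2"
  then have c: "c < q * r" and l: "l < q" using C2 by auto
  define v where "v = col (map_mat complex_of_real C1) l - col (map_mat complex_of_real C2) l"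
  have "calM0 q r q z *\<^sub>v v = 0\<^sub>v q" for z
  proof -
    have "calM0 q r q z *\<^sub>v v = col (calM0 q r q z * map_mat complex_of_real C1) l
        - col (calM0 q r q z * map_mat complex_of_real C2) l"
      using C1 C2 l calM0_carrier[of q r q z] by (simp add: v_def mult_minus_distrib_mat_vec[of _ q "q * r"])
    then show ?thesis by (auto simp: inv1 inv2 intro!: eq_vecI)
  qed
  then have "v = 0\<^sub>v (q * r)"
    using C1 C2 l by (intro calM0_square_kernel) (auto simp: v_def)
  then have "v $ c = 0" using c by simp
  then show "C1 $$ (c, l) = C2 $$ (c, l)"
    using C1 C2 c l by (simp add: v_def)
qed (use C1 C2 in simp_all)

lemma mult_mat_vec_of_real_right_inverse:
  fixes A :: "'a :: real_algebra_1 mat"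
  assumes A: "A \<in> carrier_mat n m" and C: "C \<in> carrier_mat m n" and b: "b \<in> carrier_vec n"
    and inv: "A * map_mat of_real C = 1\<^sub>m n"
  shows "A *\<^sub>v map_vec of_real (C *\<^sub>v b) = map_vec of_real b"
proof -
  have "A *\<^sub>v map_vec of_real (C *\<^sub>v b) = (A * map_mat of_real C) *\<^sub>v map_vec of_real b"
    using A C b by (simp add: of_real_hom.mult_mat_vec_hom assoc_mult_mat_vec)
  then show ?thesis using b by (simp add: inv)
qed

lemma right_inverse_calM0_unique_iff:
  assumes "0 < q" "0 < r" "q \<le> r" "q \<le> \<nu>"
  shows "(\<exists>!C. C \<in> carrier_mat (\<nu> * r) q \<and> (\<forall>z. calM0 q r \<nu> z * map_mat complex_of_real C = 1\<^sub>m q))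
    \<longleftrightarrow> \<nu> = q"
proof
  assume unique: "\<exists>!C. C \<in> carrier_mat (\<nu> * r) q \<and> (\<forall>z. calM0 q r \<nu> z * map_mat complex_of_real C = 1\<^sub>m q)"
  show "\<nu> = q"
  proof (rule ccontr)
    assume "\<nu> \<noteq> q"
    with assms obtain C' where "C' \<in> carrier_mat (\<nu> * r) q" "C' \<noteq> Cmat q r \<nu>"
      "\<And>z. calM0 q r \<nu> z * map_mat complex_of_real C' = 1\<^sub>m q"
      using right_inverse_calM0_not_unique[OF _ _ _ Cmat_carrier calM0_mult_Cmat] by (metis le_neq_implies_less)
    with unique Cmat_carrier calM0_mult_Cmat[OF \<open>q \<le> r\<close> \<open>q \<le> \<nu>\<close>] show False by blast
  qed
next
  assume "\<nu> = q"
  then show "\<exists>!C. C \<in> carrier_mat (\<nu> * r) q \<and> (\<forall>z. calM0 q r \<nu> z * map_mat complex_of_real C = 1\<^sub>m q)"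
    using Cmat_carrier calM0_mult_Cmat[OF \<open>q \<le> r\<close> \<open>q \<le> \<nu>\<close>] right_inverse_calM0_square_unique by blast
qed

theorem proposition7p1:
  fixes q r \<nu> :: nat
  assumes "0 < q" and "0 < r" and "0 < \<nu>" and "q \<le> r" and "q \<le> \<nu>"
  shows "(\<exists>C \<in> carrier_mat (\<nu> * r) q.
            \<forall>z. calM0 q r \<nu> z * map_mat complex_of_real C = 1\<^sub>m q)
       \<and> (\<forall>C \<in> carrier_mat (\<nu> * r) q.
            (\<forall>z. calM0 q r \<nu> z * map_mat complex_of_real C = 1\<^sub>m q) \<longrightarrow>
            (\<forall>b \<in> carrier_vec q. \<forall>z.
               calM0 q r \<nu> z *\<^sub>v map_vec complex_of_real (C *\<^sub>v b) = map_vec complex_of_real b))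
       \<and> ((\<exists>!C. C \<in> carrier_mat (\<nu> * r) q \<and>
              (\<forall>z. calM0 q r \<nu> z * map_mat complex_of_real C = 1\<^sub>m q)) \<longleftrightarrow> \<nu> = q)
       \<and> (\<forall>z. calM0 q r \<nu> z *
              map_mat complex_of_real
                (kron (1\<^sub>m \<nu>) (minv (Dmat r)) * calB0 q r \<nu> * minv (Dmat q)) = 1\<^sub>m q)"
proof (intro conjI)
  note inverse = calM0_mult_Cmat[OF \<open>q \<le> r\<close> \<open>q \<le> \<nu>\<close>]
  show "\<exists>C \<in> carrier_mat (\<nu> * r) q. \<forall>z. calM0 q r \<nu> z * map_mat complex_of_real C = 1\<^sub>m q"
    using Cmat_carrier inverse by blast
  show "\<forall>z. calM0 q r \<nu> z * map_mat complex_of_real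
      (kron (1\<^sub>m \<nu>) (minv (Dmat r)) * calB0 q r \<nu> * minv (Dmat q)) = 1\<^sub>m q"
    using inverse by (simp add: Cmat_def)
  show "\<forall>C \<in> carrier_mat (\<nu> * r) q. (\<forall>z. calM0 q r \<nu> z * map_mat complex_of_real C = 1\<^sub>m q) \<longrightarrow>
      (\<forall>b \<in> carrier_vec q. \<forall>z.
        calM0 q r \<nu> z *\<^sub>v map_vec complex_of_real (C *\<^sub>v b) = map_vec complex_of_real b)"
    using calM0_carrier by (blast intro: mult_mat_vec_of_real_right_inverse)
  show "(\<exists>!C. C \<in> carrier_mat (\<nu> * r) q \<and> (\<forall>z. calM0 q r \<nu> z * map_mat complex_of_real C = 1\<^sub>m q))
      \<longleftrightarrow> \<nu> = q"
    using assms by (intro right_inverse_calM0_unique_iff)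
qed

end
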